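(* Let $G$ be a group, $F$ a field of characteristic $0$, and let $R=M_n(F)$ carry an elementary $G$-grading (induced by an arbitrary tuple $(g_1,\dots,g_n)\in G^n$). If $m=x_1x_2\cdots x_k$ is a multilinear graded monomial which is a graded identity of $R$ and $k>n$, then there is a graded monomial identity $N$ of $R$ of length at most $n$ such that $m$ belongs to the $T_G$-ideal generated by $N$. Consequently, all graded monomial identities of $R$ follow from those of length at most $n$.
   Context: The elementary $G$-grading on $M_n(F)$ induced by $(g_1,\dots,g_n)\in G^n$ is $R=\bigoplus_g R_g$ with $R_g=\mathrm{span}\{e_{pq}: g_p^{-1}g_q=g\}$. Graded polynomials live in the free $G$-graded algebra on a set of variables each having a prescribed degree in $G$; a graded polynomial is a graded identity of $R$ if it vanishes under every substitution of each variable $x$ by an element of $R_{\deg x}$. The length of a monomial is its usual degree (number of variables counted with multiplicity). A $T_G$-ideal is an ideal of the free $G$-graded algebra invariant under all endomorphisms preserving the degrees of variables. *)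

theory Defs
  imports "Jordan_Normal_Form.Matrix"
begin

text \<open>Graded variables: a variable is a pair (i, g); its G-degree is g.
  There are countably many variables of each degree.  The group G is a
  (not necessarily commutative) type of class group_add, written additively.\<close>

type_synonym 'g gvar = "nat \<times> 'g"

definition wdeg :: "'g::group_add gvar list \<Rightarrow> 'g" where
  "wdeg w = foldr (\<lambda>x acc. snd x + acc) w 0"

text \<open>Free G-graded (unital, associative) algebra over F: finitely supported
  functions from words to coefficients.\<close>
definition FA :: "('g gvar list \<Rightarrow> 'a::field) set" where
  "FA = {p. finite {w. p w \<noteq> 0}}"

definition mon :: "'g gvar list \<Rightarrow> ('g gvar list \<Rightarrow> 'a::field)" where
  "mon w = (\<lambda>u. if u = w then 1 else 0)"

definition fa_add :: "('g gvar list \<Rightarrow> 'a::field) \<Rightarrow> ('g gvar list \<Rightarrow> 'a) \<Rightarrow> ('g gvar list \<Rightarrow> 'a)" where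
  "fa_add p q = (\<lambda>u. p u + q u)"

definition fa_smult :: "'a::field \<Rightarrow> ('g gvar list \<Rightarrow> 'a) \<Rightarrow> ('g gvar list \<Rightarrow> 'a)" where
  "fa_smult c p = (\<lambda>u. c * p u)"

definition fa_mult :: "('g gvar list \<Rightarrow> 'a::field) \<Rightarrow> ('g gvar list \<Rightarrow> 'a) \<Rightarrow> ('g gvar list \<Rightarrow> 'a)" where
  "fa_mult p q = (\<lambda>w. \<Sum>(u, v) \<in> {(u, v). u @ v = w}. p u * q v)"

definition fa_homog :: "'g::group_add \<Rightarrow> ('g gvar list \<Rightarrow> 'a::field) \<Rightarrow> bool" where
  "fa_homog g p \<longleftrightarrow> p \<in> FA \<and> (\<forall>w. p w \<noteq> 0 \<longrightarrow> wdeg w = g)"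

text \<open>Graded endomorphisms: determined by a substitution sending each variable
  to a homogeneous element of the same degree.\<close>
definition graded_subst :: "('g::group_add gvar \<Rightarrow> ('g gvar list \<Rightarrow> 'a::field)) \<Rightarrow> bool" where
  "graded_subst \<sigma> \<longleftrightarrow> (\<forall>x. fa_homog (snd x) (\<sigma> x))"

fun subst_word :: "('g gvar \<Rightarrow> ('g gvar list \<Rightarrow> 'a::field)) \<Rightarrow> 'g gvar list \<Rightarrow> ('g gvar list \<Rightarrow> 'a)" where
  "subst_word \<sigma> [] = mon []"
| "subst_word \<sigma> (x # w) = fa_mult (\<sigma> x) (subst_word \<sigma> w)"

definition subst_poly :: "('g gvar \<Rightarrow> ('g gvar list \<Rightarrow> 'a::field)) \<Rightarrow> ('g gvar list \<Rightarrow> 'a) \<Rightarrow> ('g gvar list \<Rightarrow> 'a)" where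
  "subst_poly \<sigma> p = (\<lambda>u. \<Sum>w \<in> {w. p w \<noteq> 0}. p w * subst_word \<sigma> w u)"

inductive_set TG_ideal :: "('g::group_add gvar list \<Rightarrow> 'a::field) \<Rightarrow> ('g gvar list \<Rightarrow> 'a) set"
  for f :: "'g gvar list \<Rightarrow> 'a" where
  gen: "f \<in> TG_ideal f"
| zero: "(\<lambda>_. 0) \<in> TG_ideal f"
| add: "p \<in> TG_ideal f \<Longrightarrow> q \<in> TG_ideal f \<Longrightarrow> fa_add p q \<in> TG_ideal f"
| smult: "p \<in> TG_ideal f \<Longrightarrow> fa_smult c p \<in> TG_ideal f"
| mult_left: "p \<in> TG_ideal f \<Longrightarrow> a \<in> FA \<Longrightarrow> fa_mult a p \<in> TG_ideal f"
| mult_right: "p \<in> TG_ideal f \<Longrightarrow> a \<in> FA \<Longrightarrow> fa_mult p a \<in> TG_ideal f"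
| subst: "p \<in> TG_ideal f \<Longrightarrow> graded_subst \<sigma> \<Longrightarrow> subst_poly \<sigma> p \<in> TG_ideal f"

definition elem_comp :: "nat \<Rightarrow> (nat \<Rightarrow> 'g::group_add) \<Rightarrow> 'g \<Rightarrow> 'a::field mat set" where
  "elem_comp n gs h = {A \<in> carrier_mat n n.
     \<forall>p<n. \<forall>q<n. A $$ (p, q) \<noteq> 0 \<longrightarrow> - gs p + gs q = h}"

definition eval_word :: "nat \<Rightarrow> ('g gvar \<Rightarrow> 'a::field mat) \<Rightarrow> 'g gvar list \<Rightarrow> 'a mat" where
  "eval_word n \<phi> w = foldr (\<lambda>x M. \<phi> x * M) w (1\<^sub>m n)"

definition is_graded_mon_identity :: "nat \<Rightarrow> (nat \<Rightarrow> 'g::group_add) \<Rightarrow> 'a::field itself \<Rightarrow> 'g gvar list \<Rightarrow> bool" where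
  "is_graded_mon_identity n gs TYPE_a w \<longleftrightarrow>
     (\<forall>\<phi> :: 'g gvar \<Rightarrow> 'a mat. (\<forall>x. \<phi> x \<in> elem_comp n gs (snd x)) \<longrightarrow>
        eval_word n \<phi> w = 0\<^sub>m n n)"

end

theory Submission
  imports Defs
begin

text \<open>A product of homogeneous matrices has a nonzero (p, q) entry only if, starting from
  g_p, every partial degree of the monomial stays inside {g_1, ..., g_n}; conversely, for a
  multilinear monomial such a "walk" is realised by a chain of matrix units. So a multilinear
  monomial m is an identity iff each starting index p has a prefix of m whose degree leaves
  the set. These at most n cut points split m into at most n consecutive blocks, and replacing
  each block by one variable of the block's degree gives a monomial N of length at most n
  which is still an identity; substituting the blocks back shows that a prefix of m, hence m,
  lies in the T_G-ideal of N.\<close>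

lemma wdeg_Nil [simp]: "wdeg [] = 0"
  by (simp add: wdeg_def)

lemma wdeg_Cons [simp]: "wdeg (x # w) = snd x + wdeg w"
  by (simp add: wdeg_def)

lemma wdeg_append [simp]: "wdeg (u @ v) = wdeg u + wdeg v"
  by (induction u) (auto simp: add.assoc)

lemma mon_support: "{w. (mon v :: _ \<Rightarrow> 'a::field) w \<noteq> 0} = {v}"
  by (auto simp: mon_def)

lemma mon_in_FA: "(mon v :: _ \<Rightarrow> 'a::field) \<in> FA"
  by (simp add: FA_def mon_support)

lemma finite_splittings: "finite {(u, v). u @ v = (w :: 'x list)}"
proof -
  have "{(u, v). u @ v = w} \<subseteq> (\<lambda>i. (take i w, drop i w)) ` {0..length w}"
  proof
    fix s assume "s \<in> {(u, v). u @ v = w}"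
    then obtain u v where "s = (u, v)" "u @ v = w" by auto
    then show "s \<in> (\<lambda>i. (take i w, drop i w)) ` {0..length w}"
      by (auto intro!: image_eqI[where x = "length u"])
  qed
  then show ?thesis
    by (rule finite_subset) simp
qed

lemma fa_mult_mon: "fa_mult (mon u) (mon v) = (mon (u @ v) :: _ \<Rightarrow> 'a::field)"
proof
  fix w
  have "fa_mult (mon u) (mon v) w = (\<Sum>s \<in> {(a, b). a @ b = w}. if s = (u, v) then (1::'a) else 0)"
    unfolding fa_mult_def by (rule sum.cong) (auto simp: mon_def split: if_splits)
  also have "\<dots> = mon (u @ v) w"
    using finite_splittings[of w] by (simp add: sum.delta' mon_def)
  finally show "fa_mult (mon u) (mon v) w = (mon (u @ v) :: _ \<Rightarrow> 'a) w" .
qed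

lemma subst_poly_mon: "subst_poly \<sigma> (mon w :: _ \<Rightarrow> 'a::field) = subst_word \<sigma> w"
  unfolding subst_poly_def mon_support by (simp add: mon_def)

lemma mon_append_in_TG_ideal:
  assumes "(mon u :: _ \<Rightarrow> 'a::field) \<in> TG_ideal f"
  shows "mon (u @ v) \<in> TG_ideal f"
proof -
  have "fa_mult (mon u) (mon v) \<in> TG_ideal f"
    using assms mon_in_FA by (rule TG_ideal.mult_right)
  then show ?thesis
    by (simp add: fa_mult_mon)
qed

lemma eval_word_Nil [simp]: "eval_word n \<phi> [] = 1\<^sub>m n"
  by (simp add: eval_word_def)

lemma eval_word_Cons [simp]: "eval_word n \<phi> (x # w) = \<phi> x * eval_word n \<phi> w"
  by (simp add: eval_word_def)

lemma elem_comp_carrier: "A \<in> elem_comp n gs h \<Longrightarrow> A \<in> carrier_mat n n"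
  by (simp add: elem_comp_def)

lemma eval_word_carrier:
  assumes "\<And>x. \<phi> x \<in> carrier_mat n n"
  shows "eval_word n \<phi> w \<in> carrier_mat n n"
  using assms by (induction w) (auto intro: mult_carrier_mat)

text \<open>Starting in row p, the partial degrees of w can be realised by a chain of matrix units
  e_{p p_1} e_{p_1 p_2} ... of the right degrees.\<close>

definition degree_walk :: "nat \<Rightarrow> (nat \<Rightarrow> 'g::group_add) \<Rightarrow> nat \<Rightarrow> 'g gvar list \<Rightarrow> bool" where
  "degree_walk n gs p w \<longleftrightarrow> (\<forall>i \<le> length w. gs p + wdeg (take i w) \<in> gs ` {..<n})"

lemma nonzero_entry_imp_degree_walk:
  fixes \<phi> :: "'g::group_add gvar \<Rightarrow> 'a::field mat"
  assumes hom: "\<And>x. \<phi> x \<in> elem_comp n gs (snd x)"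
    and "p < n" "q < n" "eval_word n \<phi> w $$ (p, q) \<noteq> 0"
  shows "degree_walk n gs p w"
  using assms(2-)
proof (induction w arbitrary: p)
  case Nil
  then show ?case by (auto simp: degree_walk_def)
next
  case (Cons x w)
  have carrier: "\<phi> x \<in> carrier_mat n n" "eval_word n \<phi> w \<in> carrier_mat n n"
    using hom elem_comp_carrier eval_word_carrier by blast+
  have "eval_word n \<phi> (x # w) $$ (p, q) = (\<Sum>r<n. \<phi> x $$ (p, r) * eval_word n \<phi> w $$ (r, q))"
    using carrier Cons.prems by (simp add: scalar_prod_def lessThan_atLeast0 mult.commute)
  with Cons.prems(3) obtain r where "r < n" and x_entry: "\<phi> x $$ (p, r) \<noteq> 0"
    and w_entry: "eval_word n \<phi> w $$ (r, q) \<noteq> 0"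
    by (metis (no_types, lifting) lessThan_iff mult_zero_left mult_zero_right sum.neutral)
  have "- gs p + gs r = snd x"
    using hom[of x] x_entry \<open>r < n\<close> Cons.prems(1) unfolding elem_comp_def by blast
  then have gs_r: "gs r = gs p + snd x"
    by (metis add_minus_cancel)
  have walk: "degree_walk n gs r w"
    using Cons.IH \<open>r < n\<close> Cons.prems(2) w_entry by blast
  show ?case
    unfolding degree_walk_def
  proof (intro allI impI)
    fix i assume i: "i \<le> length (x # w)"
    show "gs p + wdeg (take i (x # w)) \<in> gs ` {..<n}"
    proof (cases i)
      case 0
      then show ?thesis using Cons.prems(1) by simp
    next
      case (Suc j)
      then have "j \<le> length w" using i by simp
      then have "gs r + wdeg (take j w) \<in> gs ` {..<n}"
        using walk unfolding degree_walk_def by blast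
      then show ?thesis using gs_r Suc by (simp add: add.assoc)
    qed
  qed
qed

lemma graded_mon_identity_if_no_degree_walk:
  fixes gs :: "nat \<Rightarrow> 'g::group_add" and w :: "'g gvar list"
  assumes "\<And>p. p < n \<Longrightarrow> \<not> degree_walk n gs p w"
  shows "is_graded_mon_identity n gs TYPE('a::field) w"
  unfolding is_graded_mon_identity_def
proof (intro allI impI)
  fix \<phi> :: "'g gvar \<Rightarrow> 'a mat"
  assume hom: "\<forall>x. \<phi> x \<in> elem_comp n gs (snd x)"
  then have "eval_word n \<phi> w \<in> carrier_mat n n"
    by (meson elem_comp_carrier eval_word_carrier)
  moreover have "eval_word n \<phi> w $$ (p, q) = 0" if "p < n" "q < n" for p q
    using nonzero_entry_imp_degree_walk[of \<phi>] hom assms that by blast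
  ultimately show "eval_word n \<phi> w = 0\<^sub>m n n"
    by (intro eq_matI) auto
qed

definition matrix_unit :: "nat \<Rightarrow> nat \<Rightarrow> nat \<Rightarrow> 'a::zero_neq_one mat" where
  "matrix_unit n a b = mat n n (\<lambda>(i, j). if i = a \<and> j = b then 1 else 0)"

lemma matrix_unit_carrier [simp]: "matrix_unit n a b \<in> carrier_mat n n"
  by (simp add: matrix_unit_def)

lemma matrix_unit_mult:
  assumes "b < n"
  shows "matrix_unit n a b * matrix_unit n b c = (matrix_unit n a c :: 'a::semiring_1 mat)"
proof (rule eq_matI)
  fix i j assume "i < dim_row (matrix_unit n a c :: 'a mat)" "j < dim_col (matrix_unit n a c :: 'a mat)"
  then have "i < n" "j < n" by (simp_all add: matrix_unit_def)
  then have "(matrix_unit n a b * matrix_unit n b c :: 'a mat) $$ (i, j)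
      = (\<Sum>r \<in> {0..<n}. if r = b then (if i = a \<and> j = c then 1 else 0) else 0)"
    by (auto simp: matrix_unit_def scalar_prod_def if_distrib intro!: sum.cong)
  also have "\<dots> = matrix_unit n a c $$ (i, j)"
    using assms \<open>i < n\<close> \<open>j < n\<close> by (simp add: matrix_unit_def)
  finally show "(matrix_unit n a b * matrix_unit n b c :: 'a mat) $$ (i, j) = matrix_unit n a c $$ (i, j)" .
qed (simp_all add: matrix_unit_def)

lemma matrix_unit_nonzero:
  assumes "a < n" "b < n"
  shows "(matrix_unit n a b :: 'a::zero_neq_one mat) \<noteq> 0\<^sub>m n n"
proof
  assume "(matrix_unit n a b :: 'a mat) = 0\<^sub>m n n"
  then have "(matrix_unit n a b :: 'a mat) $$ (a, b) = 0\<^sub>m n n $$ (a, b)" by simp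
  with assms show False by (simp add: matrix_unit_def)
qed

lemma matrix_unit_mult_eval_word_chain:
  fixes \<phi> :: "'g gvar \<Rightarrow> 'a::field mat"
  assumes "\<And>i. i < length w \<Longrightarrow> \<phi> (w ! i) = matrix_unit n (P i) (P (Suc i))"
    and "\<And>i. i \<le> length w \<Longrightarrow> P i < n"
    and "\<And>x. \<phi> x \<in> carrier_mat n n"
  shows "matrix_unit n a (P 0) * eval_word n \<phi> w = matrix_unit n a (P (length w))"
  using assms(1,2)
proof (induction w arbitrary: P)
  case Nil
  then show ?case by (simp add: right_mult_one_mat[OF matrix_unit_carrier])
next
  case (Cons x w)
  have "eval_word n \<phi> w \<in> carrier_mat n n"
    using assms(3) by (rule eval_word_carrier)
  then have "matrix_unit n a (P 0) * eval_word n \<phi> (x # w)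
      = (matrix_unit n a (P 0) * matrix_unit n (P 0) (P (Suc 0))) * eval_word n \<phi> w"
    using Cons.prems(1)[of 0] by (simp add: assoc_mult_mat[of _ n n _ n _ n])
  also have "\<dots> = matrix_unit n a (P (Suc 0)) * eval_word n \<phi> w"
    using Cons.prems(2)[of 0] by (simp add: matrix_unit_mult)
  also have "\<dots> = matrix_unit n a (P (length (x # w)))"
  proof -
    have "\<phi> (w ! i) = matrix_unit n (P (Suc i)) (P (Suc (Suc i)))" if "i < length w" for i
      using Cons.prems(1)[of "Suc i"] that by simp
    moreover have "P (Suc i) < n" if "i \<le> length w" for i
      using Cons.prems(2)[of "Suc i"] that by simp
    ultimately show ?thesis
      using Cons.IH[of "\<lambda>i. P (Suc i)"] by simp
  qed
  finally show ?case .
qed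

lemma not_graded_mon_identity_if_degree_walk:
  fixes gs :: "nat \<Rightarrow> 'g::group_add" and w :: "'g gvar list"
  assumes "distinct w" "p < n" "degree_walk n gs p w"
  shows "\<not> is_graded_mon_identity n gs TYPE('a::field) w"
proof -
  define P where "P i = (SOME q. q < n \<and> gs q = gs p + wdeg (take i w))" for i
  have P: "P i < n \<and> gs (P i) = gs p + wdeg (take i w)" if "i \<le> length w" for i
  proof -
    have "gs p + wdeg (take i w) \<in> gs ` {..<n}"
      using assms(3) that unfolding degree_walk_def by blast
    then have "\<exists>q. q < n \<and> gs q = gs p + wdeg (take i w)"
      by (metis imageE lessThan_iff)
    then show ?thesis
      unfolding P_def by (rule someI_ex)
  qed
  define pos where "pos = the_inv_into {..<length w} ((!) w)"
  have pos: "pos (w ! i) = i" if "i < length w" for i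
    unfolding pos_def using assms(1) that by (simp add: the_inv_into_f_f inj_on_nth)
  define \<phi> :: "'g gvar \<Rightarrow> 'a mat" where
    "\<phi> x = (if x \<in> set w then matrix_unit n (P (pos x)) (P (Suc (pos x))) else 0\<^sub>m n n)" for x
  have chain: "\<phi> (w ! i) = matrix_unit n (P i) (P (Suc i))" if "i < length w" for i
    using that by (simp add: \<phi>_def pos)
  have hom: "\<phi> x \<in> elem_comp n gs (snd x)" for x
  proof (cases "x \<in> set w")
    case True
    then obtain i where i: "i < length w" "x = w ! i" by (auto simp: in_set_conv_nth)
    have "gs (P (Suc i)) = gs (P i) + snd x"
      using P[of i] P[of "Suc i"] i by (simp add: take_Suc_conv_app_nth add.assoc)
    then have "- gs (P i) + gs (P (Suc i)) = snd x"
      by simp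
    then show ?thesis
      using i chain[of i] by (simp add: elem_comp_def matrix_unit_def)
  qed (simp add: \<phi>_def elem_comp_def)
  moreover have "matrix_unit n (P 0) (P 0) * eval_word n \<phi> w = matrix_unit n (P 0) (P (length w))"
    using chain P hom elem_comp_carrier by (intro matrix_unit_mult_eval_word_chain) blast+
  moreover have "(matrix_unit n (P 0) (P (length w)) :: 'a mat) \<noteq> 0\<^sub>m n n"
    using P[of 0] P[of "length w"] by (simp add: matrix_unit_nonzero)
  ultimately show ?thesis
    using hom unfolding is_graded_mon_identity_def by (metis right_mult_zero_mat matrix_unit_carrier)
qed

lemma exists_blocks_with_cuts:
  fixes m :: "'x list" and C :: "nat set"
  assumes "finite C"
  shows "\<exists>L. length L = card C \<and> concat L = take (Max (insert 0 C)) m \<and>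
           (\<forall>c \<in> C. \<exists>i \<le> length L. concat (take i L) = take c m)"
  using assms
proof (induction C rule: finite_linorder_max_induct)
  case empty
  show ?case by (intro exI[of _ "[]"]) simp
next
  case (insert b A)
  then obtain L where L: "length L = card A" "concat L = take (Max (insert 0 A)) m"
    "\<forall>c \<in> A. \<exists>i \<le> length L. concat (take i L) = take c m"
    by blast
  define a where "a = Max (insert 0 A)"
  have "a \<le> b" "Max (insert 0 (insert b A)) = b"
    using insert.hyps by (auto simp: a_def less_imp_le intro!: Max_eqI)
  define L' where "L' = L @ [take (b - a) (drop a m)]"
  have "concat L' = take (a + (b - a)) m"
    using L(2) by (simp add: L'_def a_def take_add)
  then have concat_L': "concat L' = take b m"
    using \<open>a \<le> b\<close> by simp
  show ?case
  proof (intro exI[of _ L'] conjI ballI)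
    show "length L' = card (insert b A)"
      using L(1) insert.hyps by (auto simp: L'_def card_insert_if)
    show "concat L' = take (Max (insert 0 (insert b A))) m"
      using concat_L' \<open>Max (insert 0 (insert b A)) = b\<close> by simp
    fix c assume "c \<in> insert b A"
    then show "\<exists>i \<le> length L'. concat (take i L') = take c m"
    proof
      assume "c = b"
      then show ?thesis using concat_L' by (intro exI[of _ "length L'"]) simp
    next
      assume "c \<in> A"
      with L(3) obtain i where "i \<le> length L" "concat (take i L) = take c m" by blast
      then show ?thesis by (intro exI[of _ i]) (auto simp: L'_def)
    qed
  qed
qed

definition block_word :: "'g::group_add gvar list list \<Rightarrow> 'g gvar list" where
  "block_word L = map (\<lambda>i. (i, wdeg (L ! i))) [0..<length L]"

definition block_subst :: "'g::group_add gvar list list \<Rightarrow> 'g gvar \<Rightarrow> ('g gvar list \<Rightarrow> 'a::field)" where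
  "block_subst L x = (if fst x < length L \<and> snd x = wdeg (L ! fst x) then mon (L ! fst x) else mon [x])"

lemma length_block_word [simp]: "length (block_word L) = length L"
  by (simp add: block_word_def)

lemma wdeg_take_block_word:
  "j \<le> length L \<Longrightarrow> wdeg (take j (block_word L)) = wdeg (concat (take j L))"
proof (induction j)
  case 0
  then show ?case by simp
next
  case (Suc j)
  have "take (Suc j) (block_word L) = take j (block_word L) @ [(j, wdeg (L ! j))]"
    using Suc.prems by (simp add: block_word_def take_Suc_conv_app_nth)
  then show ?case
    using Suc by (simp add: take_Suc_conv_app_nth)
qed

lemma graded_subst_block_subst: "graded_subst (block_subst L :: _ \<Rightarrow> (_ \<Rightarrow> 'a::field))"
  unfolding graded_subst_def fa_homog_def block_subst_def by (simp add: mon_in_FA) (auto simp: mon_def)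

lemma subst_word_block_word: "subst_word (block_subst L) (block_word L) = (mon (concat L) :: _ \<Rightarrow> 'a::field)"
proof -
  have "subst_word (block_subst L) (map (\<lambda>i. (i, wdeg (L ! i))) is)
      = (mon (concat (map ((!) L) is)) :: _ \<Rightarrow> 'a)" if "set is \<subseteq> {..<length L}" for "is"
    using that by (induction "is") (auto simp: block_subst_def fa_mult_mon)
  from this[of "[0..<length L]"] show ?thesis
    by (simp add: block_word_def map_nth atLeast0LessThan)
qed

lemma mon_concat_in_TG_ideal_block_word:
  "(mon (concat L) :: _ \<Rightarrow> 'a::field) \<in> TG_ideal (mon (block_word L))"
proof -
  have "subst_poly (block_subst L) (mon (block_word L)) \<in> TG_ideal (mon (block_word L) :: _ \<Rightarrow> 'a)"
    by (rule TG_ideal.subst[OF TG_ideal.gen graded_subst_block_subst])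
  then show ?thesis
    by (simp add: subst_poly_mon subst_word_block_word)
qed

theorem mainTheorem4:
  fixes n :: nat and gs :: "nat \<Rightarrow> 'g::group_add" and m :: "'g gvar list"
  assumes "n \<ge> 1"
    and "distinct m"
    and "length m > n"
    and "is_graded_mon_identity n gs TYPE('a::field_char_0) m"
  shows "\<exists>N. length N \<le> n \<and> is_graded_mon_identity n gs TYPE('a) N
             \<and> (mon m :: 'g gvar list \<Rightarrow> 'a) \<in> TG_ideal (mon N)"
proof -
  have "\<forall>p<n. \<exists>i \<le> length m. gs p + wdeg (take i m) \<notin> gs ` {..<n}"
    using not_graded_mon_identity_if_degree_walk[OF assms(2), where 'a = 'a] assms(4)
    unfolding degree_walk_def by blast
  then obtain cut where cut: "\<And>p. p < n \<Longrightarrow> cut p \<le> length m \<and> gs p + wdeg (take (cut p) m) \<notin> gs ` {..<n}"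
    by metis
  obtain L where L: "length L = card (cut ` {..<n})" "concat L = take (Max (insert 0 (cut ` {..<n}))) m"
    "\<forall>c \<in> cut ` {..<n}. \<exists>i \<le> length L. concat (take i L) = take c m"
    using exists_blocks_with_cuts by blast
  have "length (block_word L) \<le> n"
    using L(1) card_image_le[of "{..<n}" cut] by simp
  moreover have "is_graded_mon_identity n gs TYPE('a) (block_word L)"
  proof (rule graded_mon_identity_if_no_degree_walk)
    fix p assume "p < n"
    with L(3) obtain i where "i \<le> length L" "concat (take i L) = take (cut p) m" by blast
    then show "\<not> degree_walk n gs p (block_word L)"
      using cut[OF \<open>p < n\<close>] wdeg_take_block_word unfolding degree_walk_def by fastforce
  qed
  moreover have "(mon m :: _ \<Rightarrow> 'a) \<in> TG_ideal (mon (block_word L))"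
    using mon_append_in_TG_ideal[OF mon_concat_in_TG_ideal_block_word, of L "drop (Max (insert 0 (cut ` {..<n}))) m"]
    by (simp add: L(2))
  ultimately show ?thesis by blast
qed

end
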